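(* Let the network and parameters be as described in the context, let $T>0$, and let $u\in C^1([0,T];L^2(\mathcal{E}))\cap C^0([0,T];H^1(\mathcal{E})\cap H^2_{pw}(\mathcal{E}))$ satisfy, for all $0<t<T$, \begin{align*} a^e\partial_tu^e+b^e\partial_xu^e-\epsilon^e\partial_{xx}u^e&\ge0\quad\text{on } e,\ e\in\mathcal{E},\\ \sum_{e\in\mathcal{E}(v)}\epsilon^e\partial_xu^e(v)n^e(v)&=0,\quad v\in\mathcal{V}_0,\\ u(v)&\ge0,\quad v\in\mathcal{V}_\partial, \end{align*} and the initial condition $u^e(x,0)\ge0$ for $x\in e$, $e\in\mathcal{E}$. Then $u\ge0$ on $\mathcal{E}$ for all $t\in[0,T]$.
   Context: The network is a finite, directed, connected graph with vertices $\mathcal{V}$ and edges $\mathcal{E}\subset\mathcal{V}\times\mathcal{V}$. For an edge $e=(v_i,v_j)$ set $n^e(v_i)=-1$, $n^e(v_j)=1$, and $n^e(v)=0$ otherwise. $\mathcal{E}(v)=\{e:n^e(v)\neq0\}$; $\mathcal{V}_0=\{v:|\mathcal{E}(v)|\ge2\}$, $\mathcal{V}_\partial=\mathcal{V}\setminus\mathcal{V}_0$. Each edge $e$ has length $\ell^e>0$ and is identified with $(0,\ell^e)$, start vertex at $x=0$, end vertex at $x=\ell^e$; $u^e$ is the restriction to $e$, $u^e(v)$ its value at the endpoint corresponding to $v$. $L^2(\mathcal{E})=\prod_eL^2(e)$, $H^2_{pw}(\mathcal{E})=\{u:u^e\in H^2(e)\ \forall e\}$, and $H^1(\mathcal{E})$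 is the space of edgewise $H^1$ functions that are continuous across vertices (so $u(v)$ is well defined). Assumptions: on each edge $a^e,b^e,\epsilon^e$ are positive constants with $\epsilon^e\le1$, and $\sum_{e\in\mathcal{E}(v)}b^en^e(v)=0$ for all $v\in\mathcal{V}_0$. *)

theory Defs
  imports "HOL-Analysis.Analysis"
begin

definition network :: "'v set \<Rightarrow> ('v \<times> 'v) set \<Rightarrow> bool" where
  "network V E \<longleftrightarrow> finite V \<and> E \<subseteq> V \<times> V \<and> (\<forall>e\<in>E. fst e \<noteq> snd e)
     \<and> (\<forall>v\<in>V. \<forall>w\<in>V. (v, w) \<in> (E \<union> E\<inverse>)\<^sup>*)"

definition nE :: "('v \<times> 'v) \<Rightarrow> 'v \<Rightarrow> real" where
  "nE e v = (if v = fst e then -1 else if v = snd e then 1 else 0)"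

definition edges_at :: "('v \<times> 'v) set \<Rightarrow> 'v \<Rightarrow> ('v \<times> 'v) set" where
  "edges_at E v = {e \<in> E. nE e v \<noteq> 0}"

definition inner_vertices :: "'v set \<Rightarrow> ('v \<times> 'v) set \<Rightarrow> 'v set" where
  "inner_vertices V E = {v \<in> V. card (edges_at E v) \<ge> 2}"

definition bdry_vertices :: "'v set \<Rightarrow> ('v \<times> 'v) set \<Rightarrow> 'v set" where
  "bdry_vertices V E = V - inner_vertices V E"

text \<open>Value at vertex v of a function f on edge e = (0,l): start vertex is x = 0, end vertex x = l.\<close>
definition at_vertex :: "('v \<times> 'v) \<Rightarrow> real \<Rightarrow> (real \<Rightarrow> real) \<Rightarrow> 'v \<Rightarrow> real" where
  "at_vertex e l f v = (if v = fst e then f 0 else f l)"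

definition L2on :: "real \<Rightarrow> (real \<Rightarrow> real) \<Rightarrow> bool" where
  "L2on l g \<longleftrightarrow> set_borel_measurable lborel {0..l} g \<and>
     set_integrable lborel {0..l} (\<lambda>x. (g x)\<^sup>2)"

definition L2norm :: "real \<Rightarrow> (real \<Rightarrow> real) \<Rightarrow> real" where
  "L2norm l g = sqrt (set_lebesgue_integral lborel {0..l} (\<lambda>x. (g x)\<^sup>2))"

definition ac_deriv :: "real \<Rightarrow> (real \<Rightarrow> real) \<Rightarrow> (real \<Rightarrow> real) \<Rightarrow> bool" where
  "ac_deriv l f d \<longleftrightarrow> set_integrable lborel {0..l} d \<and>
     (\<forall>x\<in>{0..l}. f x = f 0 + set_lebesgue_integral lborel {0..x} d)"

text \<open>f (its continuous representative) lies in H^2(0,l), with first derivative fx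
  (continuous representative) and second weak derivative fxx.\<close>
definition H2_rep :: "real \<Rightarrow> (real \<Rightarrow> real) \<Rightarrow> (real \<Rightarrow> real) \<Rightarrow> (real \<Rightarrow> real) \<Rightarrow> bool" where
  "H2_rep l f fx fxx \<longleftrightarrow> ac_deriv l f fx \<and> ac_deriv l fx fxx \<and> L2on l fxx"

definition C0_H2 :: "real \<Rightarrow> (real \<Rightarrow> real \<Rightarrow> real) \<Rightarrow> (real \<Rightarrow> real \<Rightarrow> real)
    \<Rightarrow> (real \<Rightarrow> real \<Rightarrow> real) \<Rightarrow> real \<Rightarrow> bool" where
  "C0_H2 T U Ux Uxx l \<longleftrightarrow> (\<forall>t\<in>{0..T}.
     ((\<lambda>s. L2norm l (\<lambda>x. U s x - U t x) + L2norm l (\<lambda>x. Ux s x - Ux t x)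
           + L2norm l (\<lambda>x. Uxx s x - Uxx t x)) \<longlongrightarrow> 0) (at t within {0..T}))"

definition C1_L2 :: "real \<Rightarrow> (real \<Rightarrow> real \<Rightarrow> real) \<Rightarrow> (real \<Rightarrow> real \<Rightarrow> real) \<Rightarrow> real \<Rightarrow> bool" where
  "C1_L2 T U Ut l \<longleftrightarrow>
     (\<forall>t\<in>{0..T}. L2on l (U t) \<and> L2on l (Ut t)) \<and>
     (\<forall>t\<in>{0..T}. ((\<lambda>s. L2norm l (\<lambda>x. (U s x - U t x) / (s - t) - Ut t x)) \<longlongrightarrow> 0)
                   (at t within {0..T})) \<and>
     (\<forall>t\<in>{0..T}. ((\<lambda>s. L2norm l (\<lambda>x. Ut s x - Ut t x)) \<longlongrightarrow> 0) (at t within {0..T}))"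

end

theory Submission
  imports Defs
begin

text \<open>The proof is a Stampacchia-type energy argument with the smooth penalty
  \<open>Phi s = arctan (min s 0) - min s 0\<close>, which is convex, vanishes exactly on \<open>[0, \<infinity>)\<close> and
  has \<open>-1 \<le> Phi' \<le> 0\<close>. Put \<open>E(t) = \<Sum>\<^sub>e a\<^sub>e \<integral>\<^sub>e Phi (u\<^sub>e t)\<close>. Multiplying the differential
  inequality on an edge by \<open>Phi' (u) \<le> 0\<close> and integrating by parts bounds
  \<open>a\<^sub>e \<integral>\<^sub>e Phi' (u) \<partial>\<^sub>t u\<close> by vertex terms, since \<open>Phi'' \<ge> 0\<close>; summed over the network, these
  cancel at inner vertices (continuity of \<open>u\<close>, the Kirchhoff condition and the balance of \<open>b\<close>)
  and vanish at boundary vertices, where \<open>u \<ge> 0\<close>. By convexity of \<open>Phi\<close> this bounds the left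
  Dini derivative of \<open>E\<close> by \<open>0\<close>. As \<open>E\<close> is continuous, nonnegative and \<open>E(0) = 0\<close>, it vanishes
  identically, i.e. \<open>u \<ge> 0\<close>.\<close>

section \<open>A convex penalty for negative values\<close>

definition Phi :: "real \<Rightarrow> real" where
  "Phi s = arctan (min s 0) - min s 0"

definition dPhi :: "real \<Rightarrow> real" where
  "dPhi s = 1 / (1 + (min s 0)\<^sup>2) - 1"

definition ddPhi :: "real \<Rightarrow> real" where
  "ddPhi s = - 2 * min s 0 / (1 + (min s 0)\<^sup>2)\<^sup>2"

lemma one_plus_square_pos: "(1::real) + x\<^sup>2 > 0"
  by (simp add: add_pos_nonneg)

lemma has_real_derivative_comp_min_0:
  fixes f f' :: "real \<Rightarrow> real"
  assumes f: "\<And>x. (f has_real_derivative f' x) (at x)" and f0: "f 0 = 0" and f'0: "f' 0 = 0"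
  shows "((\<lambda>s. f (min s 0)) has_real_derivative f' (min x 0)) (at x)"
proof -
  have "((\<lambda>s. if s \<in> {..0} then f s else 0) has_vector_derivative
      (if x \<in> {..0} then f' x else 0)) (at x within UNIV)"
  proof (rule has_vector_derivative_If_within_closures[where T="{0<..}"])
    show "(f has_vector_derivative f' x) (at x within {..0} \<union> closure {..0} \<inter> closure {0<..})"
      using f has_real_derivative_iff_has_vector_derivative has_vector_derivative_at_within by blast
  qed (use f0 f'0 in auto)
  moreover have "(\<lambda>s. if s \<in> {..0} then f s else 0) = (\<lambda>s. f (min s 0))"
    using f0 by (auto simp: fun_eq_iff min_def)
  moreover have "(if x \<in> {..0} then f' x else 0) = f' (min x 0)"
    using f'0 by (auto simp: min_def)
  ultimately show ?thesis
    by (simp add: has_real_derivative_iff_has_vector_derivative)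
qed

lemma Phi_has_real_derivative: "(Phi has_real_derivative dPhi x) (at x)"
proof -
  have "((\<lambda>s. arctan s - s) has_real_derivative 1 / (1 + s\<^sup>2) - 1) (at s)" for s
    by (auto intro!: derivative_eq_intros simp: power2_eq_square divide_inverse)
  from has_real_derivative_comp_min_0[OF this] show ?thesis
    unfolding Phi_def[abs_def] dPhi_def by simp
qed

lemma dPhi_has_real_derivative: "(dPhi has_real_derivative ddPhi x) (at x)"
proof -
  have "((\<lambda>s. 1 / (1 + s\<^sup>2) - 1) has_real_derivative - 2 * s / (1 + s\<^sup>2)\<^sup>2) (at s)" for s
    using one_plus_square_pos[of s]
    by (auto intro!: derivative_eq_intros simp: power2_eq_square field_simps)
  from has_real_derivative_comp_min_0[OF this] show ?thesis
    unfolding dPhi_def[abs_def] ddPhi_def by simp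
qed

lemma continuous_on_ddPhi: "continuous_on A ddPhi"
  unfolding ddPhi_def using one_plus_square_pos
  by (intro continuous_intros) (auto simp: less_imp_neq[symmetric])

lemma continuous_on_Phi_comp [continuous_intros]:
  "continuous_on S f \<Longrightarrow> continuous_on S (\<lambda>x. Phi (f x))"
  by (rule continuous_on_compose2[of UNIV Phi S f]) (auto intro: continuous_at_imp_continuous_on DERIV_isCont Phi_has_real_derivative)

lemma continuous_on_dPhi_comp [continuous_intros]:
  "continuous_on S f \<Longrightarrow> continuous_on S (\<lambda>x. dPhi (f x))"
  by (rule continuous_on_compose2[of UNIV dPhi S f]) (auto intro: continuous_at_imp_continuous_on DERIV_isCont dPhi_has_real_derivative)

lemma continuous_on_ddPhi_comp [continuous_intros]:
  "continuous_on S f \<Longrightarrow> continuous_on S (\<lambda>x. ddPhi (f x))"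
  by (rule continuous_on_compose2[OF continuous_on_ddPhi, of S f UNIV]) auto

lemma ddPhi_nonneg: "ddPhi s \<ge> 0"
  unfolding ddPhi_def by (auto simp: min_def intro!: divide_nonpos_nonneg)

lemma dPhi_nonpos: "dPhi s \<le> 0"
  unfolding dPhi_def by (auto simp: min_def add_pos_nonneg)

lemma abs_dPhi_le_1: "\<bar>dPhi s\<bar> \<le> 1"
  using dPhi_nonpos[of s] unfolding dPhi_def by (auto simp: min_def add_pos_nonneg)

lemma dPhi_mono: "x \<le> y \<Longrightarrow> dPhi x \<le> dPhi y"
proof -
  assume "x \<le> y"
  then have "(min y 0)\<^sup>2 \<le> (min x 0)\<^sup>2"
    unfolding abs_le_square_iff[symmetric] by (auto simp: min_def)
  then show ?thesis
    unfolding dPhi_def by (intro diff_right_mono divide_left_mono) (auto intro: one_plus_square_pos mult_pos_pos)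
qed

lemma Phi_eq_0: "s \<ge> 0 \<Longrightarrow> Phi s = 0" and dPhi_eq_0: "s \<ge> 0 \<Longrightarrow> dPhi s = 0"
  by (auto simp: Phi_def dPhi_def min_def)

lemma Phi_diff_le: "Phi y - Phi x \<le> dPhi y * (y - x)"
proof (cases x y rule: linorder_cases)
  case less
  then obtain z where z: "x < z" "z < y" "Phi y - Phi x = (y - x) * dPhi z"
    using MVT2[OF less, of Phi dPhi] Phi_has_real_derivative by blast
  then show ?thesis
    using dPhi_mono[of z y] less by (simp add: mult.commute mult_left_mono)
next
  case greater
  then obtain z where z: "y < z" "z < x" "Phi x - Phi y = (x - y) * dPhi z"
    using MVT2[OF greater, of Phi dPhi] Phi_has_real_derivative by blast
  then have "(x - y) * dPhi y \<le> (x - y) * dPhi z"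
    using dPhi_mono[of y z] greater by (simp add: mult_left_mono)
  then show ?thesis using z by (simp add: algebra_simps)
qed simp

lemma Phi_pos: assumes "s < 0" shows "Phi s > 0"
proof -
  obtain z where z: "s < z" "z < 0" "Phi 0 - Phi s = (0 - s) * dPhi z"
    using MVT2[OF assms, of Phi dPhi] Phi_has_real_derivative by blast
  have "1 < 1 + z\<^sup>2" using z by simp
  then have "1 / (1 + z\<^sup>2) < 1" by (subst divide_less_eq_1_pos) (auto intro: one_plus_square_pos)
  then have "dPhi z < 0" using z by (simp add: dPhi_def min_def)
  moreover have "Phi 0 = 0" by (simp add: Phi_def)
  ultimately show ?thesis using z assms by (simp add: mult_neg_neg)
qed

lemma Phi_nonneg: "Phi s \<ge> 0"
  using Phi_pos[of s] Phi_eq_0[of s] by linarith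

lemma Phi_eq_0_iff: "Phi s = 0 \<longleftrightarrow> s \<ge> 0"
  using Phi_pos[of s] Phi_eq_0[of s] by linarith

lemma abs_Phi_diff_le: "\<bar>Phi y - Phi x\<bar> \<le> \<bar>y - x\<bar>"
proof -
  have bound: "d * z \<le> \<bar>z\<bar>" if "\<bar>d\<bar> \<le> 1" for d z :: real
  proof -
    have "d * z \<le> \<bar>d\<bar> * \<bar>z\<bar>" by (metis abs_ge_self abs_mult)
    also have "\<dots> \<le> \<bar>z\<bar>" using that by (simp add: mult_left_le_one_le)
    finally show ?thesis .
  qed
  show ?thesis
    using Phi_diff_le[of x y] Phi_diff_le[of y x]
      bound[OF abs_dPhi_le_1, of y "y - x"] bound[OF abs_dPhi_le_1, of x "x - y"]
    by (auto simp: abs_minus_commute)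
qed

lemma set_integral_nonneg_real:
  fixes f :: "real \<Rightarrow> real"
  assumes "\<And>x. x \<in> A \<Longrightarrow> 0 \<le> f x"
  shows "0 \<le> (LINT x:A|lborel. f x)"
  unfolding set_lebesgue_integral_def
  by (rule integral_nonneg_AE, rule AE_I2) (use assms in \<open>simp split: split_indicator\<close>)

lemma set_integral_Icc_FTC:
  fixes g g' :: "real \<Rightarrow> real"
  assumes "a \<le> b" and "\<And>x. x \<in> {a..b} \<Longrightarrow> (g has_real_derivative g' x) (at x within {a..b})"
    and "continuous_on {a..b} g'"
  shows "(LINT x:{a..b}|lborel. g' x) = g b - g a"
proof -
  have "(g' has_integral (g b - g a)) {a..b}"
    using fundamental_theorem_of_calculus[of a b g g'] assms
    by (simp add: has_real_derivative_iff_has_vector_derivative)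
  moreover have "(LINT x:{a..b}|lborel. g' x) = integral {a..b} g'"
    by (rule set_borel_integral_eq_integral(2)[OF borel_integrable_atLeastAtMost'[OF assms(3)]])
  ultimately show ?thesis by (simp add: integral_unique)
qed

lemma set_integral_eq_integral_subinterval:
  fixes h :: "real \<Rightarrow> real"
  assumes "set_integrable lborel {a..b} h" "{c..d} \<subseteq> {a..b}"
  shows "(LINT x:{c..d}|lborel. h x) = integral {c..d} h" "h integrable_on {c..d}"
proof -
  have "set_integrable lborel {c..d} h"
    by (rule set_integrable_subset[OF assms(1) _ assms(2)]) simp
  then show "(LINT x:{c..d}|lborel. h x) = integral {c..d} h" "h integrable_on {c..d}"
    using set_borel_integral_eq_integral by auto
qed

lemma set_integrable_mult_continuous:
  fixes f g :: "real \<Rightarrow> real"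
  assumes f: "set_integrable lborel {a..b} f" and g: "continuous_on {a..b} g"
  shows "set_integrable lborel {a..b} (\<lambda>x. f x * g x)"
proof -
  obtain C where C: "\<And>x. x \<in> {a..b} \<Longrightarrow> \<bar>g x\<bar> \<le> C"
    using compact_imp_bounded[OF compact_continuous_image[OF g compact_Icc]]
    unfolding bounded_iff by (metis imageI real_norm_def)
  have "(\<lambda>x. indicator {a..b} x * f x) \<in> borel_measurable lborel"
       "(\<lambda>x. indicator {a..b} x * g x) \<in> borel_measurable lborel"
    using f borel_integrable_atLeastAtMost'[OF g] unfolding set_integrable_def
    by (simp_all add: borel_measurable_integrable)
  moreover have "(\<lambda>x. indicator {a..b} x *\<^sub>R (f x * g x)) =
      (\<lambda>x. (indicator {a..b} x * f x) * (indicator {a..b} x * g x))"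
    by (auto split: split_indicator)
  ultimately have "set_borel_measurable lborel {a..b} (\<lambda>x. f x * g x)"
    unfolding set_borel_measurable_def by simp
  moreover have "norm (f x * g x) \<le> norm (C * f x)" if "x \<in> {a..b}" for x
  proof -
    have "\<bar>f x\<bar> * \<bar>g x\<bar> \<le> \<bar>f x\<bar> * C" by (rule mult_left_mono) (use C[OF that] in auto)
    moreover have "0 \<le> C" using C[OF that] by linarith
    ultimately show ?thesis by (simp add: abs_mult mult.commute)
  qed
  then have "AE x in lborel. x \<in> {a..b} \<longrightarrow> norm (f x * g x) \<le> norm (C * f x)"
    by (intro AE_I2) auto
  ultimately show ?thesis
    by (rule set_integrable_bound[OF set_integrable_mult_right[OF f]])
qed

lemma ac_deriv_eq_integral:
  assumes "ac_deriv l H h" "x \<in> {0..l}"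
  shows "H x = H 0 + integral {0..x} h"
proof -
  have "set_integrable lborel {0..l} h" "H x = H 0 + (LINT y:{0..x}|lborel. h y)"
    using assms unfolding ac_deriv_def by blast+
  moreover have "{0..x} \<subseteq> {0..l}" using assms(2) by auto
  ultimately show ?thesis
    using set_integral_eq_integral_subinterval(1) by metis
qed

lemma ac_deriv_continuous_on:
  assumes "ac_deriv l H h"
  shows "continuous_on {0..l} H"
proof -
  have "h integrable_on {0..l}"
    using assms set_integral_eq_integral_subinterval(2)[of 0 l h 0 l] unfolding ac_deriv_def by blast
  then have "continuous_on {0..l} (\<lambda>x. H 0 + integral {0..x} h)"
    by (intro continuous_intros indefinite_integral_continuous_1)
  then show ?thesis
    by (rule continuous_on_eq) (rule ac_deriv_eq_integral[OF assms, symmetric])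
qed

lemma ac_deriv_has_real_derivative:
  assumes "ac_deriv l H h" and "continuous_on {0..l} h" and "x \<in> {0..l}"
  shows "(H has_real_derivative h x) (at x within {0..l})"
proof -
  have "((\<lambda>x. H 0 + integral {0..x} h) has_real_derivative h x) (at x within {0..l})"
    using DERIV_add[OF DERIV_const integral_has_real_derivative[OF assms(2,3)]] by simp
  then show ?thesis
    by (rule has_field_derivative_transform_within[OF _ zero_less_one assms(3)])
       (use ac_deriv_eq_integral[OF assms(1)] in metis)
qed

lemma integrable_mult_indicator_halfplane:
  fixes f g :: "real \<Rightarrow> real"
  assumes f: "integrable lborel f" and g: "integrable lborel g"
  shows "integrable (lborel \<Otimes>\<^sub>M lborel) (\<lambda>(x, y). f x * (g y * indicator {..x} y))"
proof (rule lborel_pair.Fubini_integrable)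
  have [measurable]: "f \<in> borel_measurable lborel" "g \<in> borel_measurable lborel"
    using f g by (simp_all add: borel_measurable_integrable)
  have ind: "indicator {..x} y = (if y \<le> x then 1 else 0 :: real)" for x y :: real
    by (simp split: split_indicator)
  show "(\<lambda>(x, y). f x * (g y * indicator {..x} y)) \<in> borel_measurable (lborel \<Otimes>\<^sub>M lborel)"
    unfolding ind by measurable
  have g_ind: "integrable lborel (\<lambda>y. g y * indicator {..x} y)"
    and g_abs_ind: "integrable lborel (\<lambda>y. \<bar>g y\<bar> * indicator {..x} y)" for x
    by (auto intro!: integrable_real_mult_indicator integrable_abs g)
  then show "AE x in lborel. integrable lborel (\<lambda>y. case (x, y) of (x, y) \<Rightarrow> f x * (g y * indicator {..x} y))"
    by simp
  have bound: "(\<integral>y. norm (f x * (g y * indicator {..x} y)) \<partial>lborel) \<le> \<bar>f x\<bar> * (\<integral>y. \<bar>g y\<bar> \<partial>lborel)"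
    for x
    using integral_mono[OF g_abs_ind integrable_abs[OF g], of x]
    by (simp add: abs_mult mult_left_mono split: split_indicator)
  show "integrable lborel (\<lambda>x. \<integral>y. norm (case (x, y) of (x, y) \<Rightarrow> f x * (g y * indicator {..x} y)) \<partial>lborel)"
  proof (rule Bochner_Integration.integrable_bound)
    show "integrable lborel (\<lambda>x. \<bar>f x\<bar> * (\<integral>y. \<bar>g y\<bar> \<partial>lborel))"
      using f by simp
    show "AE x in lborel. norm (\<integral>y. norm (case (x, y) of (x, y) \<Rightarrow> f x * (g y * indicator {..x} y)) \<partial>lborel)
        \<le> norm (\<bar>f x\<bar> * (\<integral>y. \<bar>g y\<bar> \<partial>lborel))"
      using bound order_trans[OF _ bound] by (intro AE_I2) (simp add: integral_nonneg_AE)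
  qed (unfold ind, measurable)
qed

lemma set_integral_triangle_swap:
  fixes h k :: "real \<Rightarrow> real"
  assumes h: "set_integrable lborel {0..l} h" and k: "set_integrable lborel {0..l} k"
  shows "(LINT x:{0..l}|lborel. h x * (LINT y:{0..x}|lborel. k y))
       = (LINT y:{0..l}|lborel. k y * (LINT x:{y..l}|lborel. h x))"
proof -
  define hh where "hh x = indicator {0..l} x * h x" for x :: real
  define kk where "kk y = indicator {0..l} y * k y" for y :: real
  define F where "F x y = hh x * (kk y * indicator {..x} y)" for x y :: real
  have "integrable (lborel \<Otimes>\<^sub>M lborel) (\<lambda>(x, y). F x y)"
    using h k unfolding F_def hh_def kk_def set_integrable_def
    by (intro integrable_mult_indicator_halfplane) simp_all
  then have "(\<integral>x. (\<integral>y. F x y \<partial>lborel) \<partial>lborel) = (\<integral>y. (\<integral>x. F x y \<partial>lborel) \<partial>lborel)"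
    by (intro lborel_pair.Fubini_integral[symmetric]) simp
  moreover have "(\<integral>y. F x y \<partial>lborel) = indicator {0..l} x * (h x * (LINT y:{0..x}|lborel. k y))" for x
  proof (cases "x \<in> {0..l}")
    case True
    then have "(\<lambda>y. F x y) = (\<lambda>y. hh x * (indicator {0..x} y *\<^sub>R k y))"
      by (auto simp: F_def kk_def fun_eq_iff split: split_indicator)
    then show ?thesis
      using True by (simp add: hh_def set_lebesgue_integral_def)
  qed (simp add: F_def hh_def)
  moreover have "(\<integral>x. F x y \<partial>lborel) = indicator {0..l} y * (k y * (LINT x:{y..l}|lborel. h x))" for y
  proof (cases "y \<in> {0..l}")
    case True
    then have "(\<lambda>x. F x y) = (\<lambda>x. kk y * (indicator {y..l} x *\<^sub>R h x))"
      by (auto simp: F_def hh_def fun_eq_iff split: split_indicator)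
    then show ?thesis
      using True by (simp add: kk_def set_lebesgue_integral_def)
  qed (simp add: F_def kk_def)
  ultimately show ?thesis
    by (simp add: set_lebesgue_integral_def)
qed

lemma ac_deriv_set_integral_Icc:
  assumes "ac_deriv l H h" and "y \<in> {0..l}"
  shows "(LINT x:{y..l}|lborel. h x) = H l - H y"
proof -
  have hi: "set_integrable lborel {0..l} h" using assms(1) by (simp add: ac_deriv_def)
  have "integral {0..y} h + integral {y..l} h = integral {0..l} h"
    using assms(2) set_integral_eq_integral_subinterval(2)[OF hi order_refl]
    by (intro Henstock_Kurzweil_Integration.integral_combine) auto
  moreover have "(LINT x:{y..l}|lborel. h x) = integral {y..l} h"
    using assms(2) by (intro set_integral_eq_integral_subinterval(1)[OF hi]) auto
  moreover have "H y = H 0 + integral {0..y} h" "H l = H 0 + integral {0..l} h"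
    using assms(2) by (intro ac_deriv_eq_integral[OF assms(1)]; simp)+
  ultimately show ?thesis by linarith
qed

lemma ac_deriv_integration_by_parts:
  fixes g g' :: "real \<Rightarrow> real"
  assumes l: "0 \<le> l" and H: "ac_deriv l H h"
    and g: "\<And>x. x \<in> {0..l} \<Longrightarrow> (g has_real_derivative g' x) (at x within {0..l})"
    and g': "continuous_on {0..l} g'"
  shows "(LINT x:{0..l}|lborel. h x * g x) = H l * g l - H 0 * g 0 - (LINT x:{0..l}|lborel. H x * g' x)"
proof -
  have hi: "set_integrable lborel {0..l} h" using H by (simp add: ac_deriv_def)
  have g'i: "set_integrable lborel {0..l} g'" by (rule borel_integrable_atLeastAtMost'[OF g'])
  have gc: "continuous_on {0..l} g"
    using g by (meson DERIV_continuous continuous_on_eq_continuous_within)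
  have g_FTC: "(LINT y:{0..x}|lborel. g' y) = g x - g 0" if "x \<in> {0..l}" for x
    using that
    by (intro set_integral_Icc_FTC DERIV_subset[OF g] continuous_on_subset[OF g']) auto
  have "(LINT x:{0..l}|lborel. h x * g x) - g 0 * (H l - H 0)
      = (LINT x:{0..l}|lborel. h x * (g x - g 0))"
    using ac_deriv_set_integral_Icc[OF H, of 0] l set_integrable_mult_continuous[OF hi gc] hi
    by (simp add: right_diff_distrib set_integral_diff(2) mult.commute[of _ "g 0"])
  also have "\<dots> = (LINT x:{0..l}|lborel. h x * (LINT y:{0..x}|lborel. g' y))"
    by (intro set_lebesgue_integral_cong) (auto simp: g_FTC)
  also have "\<dots> = (LINT y:{0..l}|lborel. g' y * (LINT x:{y..l}|lborel. h x))"
    by (rule set_integral_triangle_swap[OF hi g'i])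
  also have "\<dots> = (LINT y:{0..l}|lborel. H l * g' y - H y * g' y)"
    by (intro set_lebesgue_integral_cong) (auto simp: ac_deriv_set_integral_Icc[OF H] algebra_simps)
  also have "\<dots> = H l * (g l - g 0) - (LINT x:{0..l}|lborel. H x * g' x)"
    using g_FTC[of l] l g'i
      borel_integrable_atLeastAtMost'[OF continuous_on_mult[OF ac_deriv_continuous_on[OF H] g']]
    by (simp add: set_integral_diff(2))
  finally show ?thesis by (simp add: algebra_simps)
qed

lemma L2on_set_integrable:
  assumes "L2on l f"
  shows "set_integrable lborel {0..l} f"
proof (rule set_integrable_bound)
  show "set_integrable lborel {0..l} (\<lambda>x. 1 + (f x)\<^sup>2)"
    using assms unfolding L2on_def
    by (intro set_integral_add(1)[OF borel_integrable_atLeastAtMost'[OF continuous_on_const]]) auto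
  show "set_borel_measurable lborel {0..l} f"
    using assms unfolding L2on_def by simp
  have "\<bar>y\<bar> \<le> 1 + y\<^sup>2" for y :: real
  proof -
    have "2 * \<bar>y\<bar> \<le> \<bar>y\<bar>\<^sup>2 + 1"
      using zero_le_power2[of "\<bar>y\<bar> - 1"] by (simp add: power2_diff)
    then show ?thesis using zero_le_power2[of y] by simp
  qed
  then show "AE x in lborel. x \<in> {0..l} \<longrightarrow> norm (f x) \<le> norm (1 + (f x)\<^sup>2)"
    by (intro AE_I2) (simp add: add_pos_nonneg)
qed

lemma L2on_lincomb:
  assumes f: "L2on l f" and g: "L2on l g"
  shows "L2on l (\<lambda>x. c * f x + d * g x)"
proof -
  have [measurable]: "(\<lambda>x. indicator {0..l} x * f x) \<in> borel_measurable lborel"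
      "(\<lambda>x. indicator {0..l} x * g x) \<in> borel_measurable lborel"
    using f g unfolding L2on_def set_borel_measurable_def by simp_all
  have "(\<lambda>x. indicator {0..l} x *\<^sub>R (c * f x + d * g x)) =
      (\<lambda>x. c * (indicator {0..l} x * f x) + d * (indicator {0..l} x * g x))"
    by (auto simp: fun_eq_iff split: split_indicator)
  then have M: "set_borel_measurable lborel {0..l} (\<lambda>x. c * f x + d * g x)"
    unfolding set_borel_measurable_def by simp
  have "(\<lambda>x. indicator {0..l} x *\<^sub>R (c * f x + d * g x)\<^sup>2) =
      (\<lambda>x. (indicator {0..l} x *\<^sub>R (c * f x + d * g x))\<^sup>2)"
    by (auto simp: fun_eq_iff split: split_indicator)
  then have M2: "set_borel_measurable lborel {0..l} (\<lambda>x. (c * f x + d * g x)\<^sup>2)"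
    using M unfolding set_borel_measurable_def by simp
  have "(c * y + d * z)\<^sup>2 \<le> 2 * c\<^sup>2 * y\<^sup>2 + 2 * d\<^sup>2 * z\<^sup>2" for y z :: real
    using sum_squares_ge_zero[of "c * y - d * z" 0]
    by (simp add: power2_eq_square algebra_simps)
  then have "AE x in lborel. x \<in> {0..l} \<longrightarrow>
      norm ((c * f x + d * g x)\<^sup>2) \<le> norm (2 * c\<^sup>2 * (f x)\<^sup>2 + 2 * d\<^sup>2 * (g x)\<^sup>2)"
    by (intro AE_I2) simp
  moreover have "set_integrable lborel {0..l} (\<lambda>x. 2 * c\<^sup>2 * (f x)\<^sup>2 + 2 * d\<^sup>2 * (g x)\<^sup>2)"
    using f g unfolding L2on_def
    by (intro set_integral_add(1) set_integrable_mult_right) auto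
  ultimately show ?thesis
    unfolding L2on_def using M set_integrable_bound[OF _ M2] by blast
qed

lemma L2on_diff_quotient:
  assumes "L2on l f" "L2on l g" "L2on l h"
  shows "L2on l (\<lambda>x. (f x - g x) / c - h x)"
proof -
  have "L2on l (\<lambda>x. (1 / c) * f x + (- 1 / c) * g x)"
    using assms by (intro L2on_lincomb)
  then have "L2on l (\<lambda>x. 1 * ((1 / c) * f x + (- 1 / c) * g x) + (- 1) * h x)"
    using assms by (intro L2on_lincomb)
  then show ?thesis
    by (simp add: diff_divide_distrib)
qed

lemma set_integral_abs_le_L2:
  assumes w: "L2on l w" and l: "0 \<le> l" and d: "\<delta> > 0"
  shows "(LINT x:{0..l}|lborel. \<bar>w x\<bar>) \<le> \<delta> * l / 2 + (LINT x:{0..l}|lborel. (w x)\<^sup>2) / (2 * \<delta>)"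
proof -
  have I: "set_integrable lborel {0..l} (\<lambda>x. (w x)\<^sup>2 / (2 * \<delta>))"
    using w unfolding L2on_def by (intro set_integrable_divide) auto
  have "(LINT x:{0..l}|lborel. \<bar>w x\<bar>) \<le> (LINT x:{0..l}|lborel. \<delta> / 2 + (w x)\<^sup>2 / (2 * \<delta>))"
  proof (rule set_integral_mono)
    show "set_integrable lborel {0..l} (\<lambda>x. \<bar>w x\<bar>)"
      by (rule set_integrable_abs[OF L2on_set_integrable[OF w]])
    show "set_integrable lborel {0..l} (\<lambda>x. \<delta> / 2 + (w x)\<^sup>2 / (2 * \<delta>))"
      by (rule set_integral_add(1)[OF borel_integrable_atLeastAtMost'[OF continuous_on_const] I])
    fix x
    have "2 * \<delta> * \<bar>w x\<bar> \<le> \<delta>\<^sup>2 + (w x)\<^sup>2"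
      using zero_le_power2[of "\<bar>w x\<bar> - \<delta>"] by (simp add: power2_diff algebra_simps)
    then show "\<bar>w x\<bar> \<le> \<delta> / 2 + (w x)\<^sup>2 / (2 * \<delta>)"
      using d by (simp add: field_simps power2_eq_square)
  qed
  also have "\<dots> = \<delta> * l / 2 + (LINT x:{0..l}|lborel. (w x)\<^sup>2) / (2 * \<delta>)"
    using l I by (simp add: set_integral_add(2)[OF borel_integrable_atLeastAtMost'[OF continuous_on_const]]
        set_integral_const measure_lborel_Icc)
  finally show ?thesis .
qed

lemma L2norm_tendsto_0_imp_L1:
  assumes lim: "((\<lambda>s. L2norm l (w s)) \<longlongrightarrow> 0) F" and L2: "eventually (\<lambda>s. L2on l (w s)) F"
    and l: "0 < l"
  shows "((\<lambda>s. LINT x:{0..l}|lborel. \<bar>w s x\<bar>) \<longlongrightarrow> 0) F"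
proof (rule tendstoI)
  fix e :: real assume e: "e > 0"
  define I where "I s = (LINT x:{0..l}|lborel. (w s x)\<^sup>2)" for s
  have "(L2norm l (w s))\<^sup>2 = I s" for s
    using set_integral_nonneg_real[of "{0..l}" "\<lambda>x. (w s x)\<^sup>2"] by (simp add: L2norm_def I_def)
  then have "(I \<longlongrightarrow> 0) F"
    using tendsto_power[OF lim, of 2] by simp
  then have "eventually (\<lambda>s. I s < e\<^sup>2 / l) F"
    using e l by (intro order_tendstoD(2)) auto
  with L2 show "eventually (\<lambda>s. dist (LINT x:{0..l}|lborel. \<bar>w s x\<bar>) 0 < e) F"
  proof eventually_elim
    case (elim s)
    have "(LINT x:{0..l}|lborel. \<bar>w s x\<bar>) \<le> e / l * l / 2 + I s / (2 * (e / l))"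
      unfolding I_def using elim(1) e l by (intro set_integral_abs_le_L2) auto
    also have "\<dots> < e"
      using elim(2) e l by (simp add: field_simps power2_eq_square)
    finally show ?case
      using set_integral_nonneg_real[of "{0..l}" "\<lambda>x. \<bar>w s x\<bar>"] by simp
  qed
qed

lemma abs_set_integral_mult_le:
  fixes G w :: "real \<Rightarrow> real"
  assumes w: "set_integrable lborel {0..l} w" and G: "continuous_on {0..l} G"
    and G_le: "\<And>x. x \<in> {0..l} \<Longrightarrow> \<bar>G x\<bar> \<le> C"
  shows "\<bar>LINT x:{0..l}|lborel. G x * w x\<bar> \<le> C * (LINT x:{0..l}|lborel. \<bar>w x\<bar>)"
proof -
  have I: "set_integrable lborel {0..l} (\<lambda>x. G x * w x)"
    using set_integrable_mult_continuous[OF w G] by (simp add: mult.commute)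
  have "\<bar>LINT x:{0..l}|lborel. G x * w x\<bar> \<le> (LINT x:{0..l}|lborel. \<bar>G x * w x\<bar>)"
    using set_integral_norm_bound[OF I] by simp
  also have "\<dots> \<le> (LINT x:{0..l}|lborel. C * \<bar>w x\<bar>)"
    using G_le
    by (intro set_integral_mono set_integrable_abs I set_integrable_mult_right w)
       (simp add: abs_mult mult_right_mono)
  finally show ?thesis by simp
qed

lemma C1_L2_L2on:
  assumes "C1_L2 T U Ut l" "t \<in> {0..T}"
  shows "L2on l (U t)" "L2on l (Ut t)"
  using assms unfolding C1_L2_def by blast+

lemma C1_L2_diff_quotient_L1:
  assumes C1: "C1_L2 T U Ut l" and s: "s \<in> {0..T}" and l: "0 < l"
  shows "((\<lambda>t. LINT x:{0..l}|lborel. \<bar>(U t x - U s x) / (t - s) - Ut s x\<bar>) \<longlongrightarrow> 0)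
           (at s within {0..T})"
proof (rule L2norm_tendsto_0_imp_L1[OF _ _ l])
  show "((\<lambda>t. L2norm l (\<lambda>x. (U t x - U s x) / (t - s) - Ut s x)) \<longlongrightarrow> 0) (at s within {0..T})"
    using C1 s unfolding C1_L2_def by blast
  show "eventually (\<lambda>t. L2on l (\<lambda>x. (U t x - U s x) / (t - s) - Ut s x)) (at s within {0..T})"
    using C1_L2_L2on[OF C1] s
    by (auto simp: eventually_at_filter intro!: always_eventually L2on_diff_quotient)
qed

lemma C1_L2_L1_continuous:
  assumes C1: "C1_L2 T U Ut l" and s: "s \<in> {0..T}" and l: "0 < l"
  shows "((\<lambda>t. LINT x:{0..l}|lborel. \<bar>U t x - U s x\<bar>) \<longlongrightarrow> 0) (at s within {0..T})"
proof -
  define q where "q t = (LINT x:{0..l}|lborel. \<bar>(U t x - U s x) / (t - s) - Ut s x\<bar>)" for t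
  define c where "c = (LINT x:{0..l}|lborel. \<bar>Ut s x\<bar>)"
  have "(LINT x:{0..l}|lborel. \<bar>U t x - U s x\<bar>) \<le> \<bar>t - s\<bar> * (q t + c)"
    if t: "t \<in> {0..T}" "t \<noteq> s" for t
  proof -
    have L2: "L2on l (\<lambda>x. (U t x - U s x) / (t - s) - Ut s x)" "L2on l (Ut s)"
      using C1_L2_L2on[OF C1] s t by (simp_all add: L2on_diff_quotient)
    have "\<bar>U t x - U s x\<bar> \<le> \<bar>t - s\<bar> * (\<bar>(U t x - U s x) / (t - s) - Ut s x\<bar> + \<bar>Ut s x\<bar>)" for x
    proof -
      have "U t x - U s x = (t - s) * (((U t x - U s x) / (t - s) - Ut s x) + Ut s x)"
        using t by simp
      then show ?thesis
        by (metis abs_mult abs_triangle_ineq abs_ge_zero mult_left_mono)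
    qed
    then have "(LINT x:{0..l}|lborel. \<bar>U t x - U s x\<bar>)
        \<le> (LINT x:{0..l}|lborel. \<bar>t - s\<bar> * (\<bar>(U t x - U s x) / (t - s) - Ut s x\<bar> + \<bar>Ut s x\<bar>))"
      using C1_L2_L2on[OF C1] s t L2
      by (intro set_integral_mono set_integrable_abs set_integral_diff(1) set_integrable_mult_right
          set_integral_add(1) L2on_set_integrable) auto
    then show ?thesis
      using L2 unfolding q_def c_def
      by (simp add: set_integral_add(2) set_integrable_abs L2on_set_integrable)
  qed
  then have "eventually (\<lambda>t. (LINT x:{0..l}|lborel. \<bar>U t x - U s x\<bar>) \<le> \<bar>t - s\<bar> * (q t + c))
      (at s within {0..T})"
    by (auto simp: eventually_at_filter intro!: always_eventually)
  moreover have "((\<lambda>t. \<bar>t - s\<bar> * (q t + c)) \<longlongrightarrow> \<bar>s - s\<bar> * (0 + c)) (at s within {0..T})"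
    unfolding q_def by (intro tendsto_intros C1_L2_diff_quotient_L1[OF C1 s l])
  moreover have "eventually (\<lambda>t. 0 \<le> (LINT x:{0..l}|lborel. \<bar>U t x - U s x\<bar>)) (at s within {0..T})"
    by (intro always_eventually allI set_integral_nonneg_real abs_ge_zero)
  ultimately show ?thesis
    using tendsto_sandwich[OF _ _ tendsto_const] by fastforce
qed

lemma C1_L2_weighted_diff_quotient:
  fixes G :: "real \<Rightarrow> real"
  assumes C1: "C1_L2 T U Ut l" and s: "s \<in> {0..T}" and l: "0 < l" and G: "continuous_on {0..l} G"
  shows "((\<lambda>t. LINT x:{0..l}|lborel. G x * ((U s x - U t x) / (s - t))) \<longlongrightarrow>
           (LINT x:{0..l}|lborel. G x * Ut s x)) (at s within {0..T})"
proof -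
  obtain C where C: "\<And>x. x \<in> {0..l} \<Longrightarrow> \<bar>G x\<bar> \<le> C"
    using compact_imp_bounded[OF compact_continuous_image[OF G compact_Icc]]
    unfolding bounded_iff by (metis imageI real_norm_def)
  define q where "q t x = (U t x - U s x) / (t - s) - Ut s x" for t x
  define D where "D t = (LINT x:{0..l}|lborel. G x * ((U s x - U t x) / (s - t)))
      - (LINT x:{0..l}|lborel. G x * Ut s x)" for t
  have "\<bar>D t\<bar> \<le> C * (LINT x:{0..l}|lborel. \<bar>q t x\<bar>)" if t: "t \<in> {0..T}" "t \<noteq> s" for t
  proof -
    have L2: "L2on l (q t)" "L2on l (Ut s)"
      using C1_L2_L2on[OF C1] s t unfolding q_def by (simp_all add: L2on_diff_quotient)
    have "(U s x - U t x) / (s - t) = (U t x - U s x) / (t - s)" for x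
      by (metis minus_diff_eq minus_divide_divide)
    then have "(\<lambda>x. G x * ((U s x - U t x) / (s - t))) = (\<lambda>x. G x * q t x + G x * Ut s x)"
      by (simp add: fun_eq_iff q_def right_diff_distrib)
    moreover have "set_integrable lborel {0..l} (\<lambda>x. G x * q t x)"
        "set_integrable lborel {0..l} (\<lambda>x. G x * Ut s x)"
      using set_integrable_mult_continuous[OF L2on_set_integrable[OF L2(1)] G]
        set_integrable_mult_continuous[OF L2on_set_integrable[OF L2(2)] G]
      by (simp_all add: mult.commute)
    ultimately have "D t = (LINT x:{0..l}|lborel. G x * q t x)"
      by (simp add: D_def set_integral_add(2))
    then show ?thesis
      using abs_set_integral_mult_le[OF L2on_set_integrable[OF L2(1)] G C] by simp
  qed
  then have "eventually (\<lambda>t. \<bar>D t\<bar> \<le> C * (LINT x:{0..l}|lborel. \<bar>q t x\<bar>)) (at s within {0..T})"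
    by (auto simp: eventually_at_filter intro!: always_eventually)
  moreover have "((\<lambda>t. C * (LINT x:{0..l}|lborel. \<bar>q t x\<bar>)) \<longlongrightarrow> C * 0) (at s within {0..T})"
    unfolding q_def by (intro tendsto_intros C1_L2_diff_quotient_L1[OF C1 s l])
  ultimately have "((\<lambda>t. \<bar>D t\<bar>) \<longlongrightarrow> 0) (at s within {0..T})"
    using tendsto_sandwich[OF always_eventually[of "\<lambda>t. 0 \<le> \<bar>D t\<bar>"] _ tendsto_const] by simp
  then have "(D \<longlongrightarrow> 0) (at s within {0..T})"
    by (rule tendsto_rabs_zero_cancel)
  then show ?thesis
    unfolding D_def by (simp add: LIM_zero_iff)
qed

section \<open>The energy inequality on a single edge\<close>

lemma H2_rep_continuous_on:
  assumes "H2_rep l f fx fxx"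
  shows "continuous_on {0..l} f" "continuous_on {0..l} fx"
  using assms ac_deriv_continuous_on unfolding H2_rep_def by blast+

lemma H2_rep_has_real_derivative:
  assumes "H2_rep l f fx fxx" "x \<in> {0..l}"
  shows "(f has_real_derivative fx x) (at x within {0..l})"
  using assms ac_deriv_has_real_derivative H2_rep_continuous_on(2) unfolding H2_rep_def by blast

lemma H2_rep_set_integral_dPhi_transport:
  assumes H2: "H2_rep l f fx fxx" and l: "0 \<le> l"
  shows "(LINT x:{0..l}|lborel. dPhi (f x) * fx x) = Phi (f l) - Phi (f 0)"
  using l H2_rep_continuous_on[OF H2]
  by (intro set_integral_Icc_FTC DERIV_chain2[OF Phi_has_real_derivative]
      H2_rep_has_real_derivative[OF H2]) (auto intro!: continuous_intros)

lemma H2_rep_set_integral_dPhi_diffusion: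
  assumes H2: "H2_rep l f fx fxx" and l: "0 \<le> l"
  shows "(LINT x:{0..l}|lborel. fxx x * dPhi (f x)) \<le> fx l * dPhi (f l) - fx 0 * dPhi (f 0)"
proof -
  have "(LINT x:{0..l}|lborel. fxx x * dPhi (f x)) =
      fx l * dPhi (f l) - fx 0 * dPhi (f 0) - (LINT x:{0..l}|lborel. fx x * (ddPhi (f x) * fx x))"
    using H2 l H2_rep_continuous_on[OF H2]
    by (intro ac_deriv_integration_by_parts DERIV_chain2[OF dPhi_has_real_derivative]
        H2_rep_has_real_derivative[OF H2]) (auto simp: H2_rep_def intro!: continuous_intros)
  moreover have "0 \<le> (LINT x:{0..l}|lborel. fx x * (ddPhi (f x) * fx x))"
    using ddPhi_nonneg
    by (intro set_integral_nonneg_real) (metis mult.left_commute mult_nonneg_nonneg zero_le_square)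
  ultimately show ?thesis by linarith
qed

lemma edge_energy_inequality:
  fixes f fx fxx w :: "real \<Rightarrow> real"
  assumes l: "0 < l" and eps: "0 \<le> eps"
    and H2: "H2_rep l f fx fxx" and w: "set_integrable lborel {0..l} w"
    and pde: "AE x in lborel. x \<in> {0<..<l} \<longrightarrow> a * w x + b * fx x - eps * fxx x \<ge> 0"
  shows "a * (LINT x:{0..l}|lborel. dPhi (f x) * w x) \<le>
     eps * (fx l * dPhi (f l) - fx 0 * dPhi (f 0)) - b * (Phi (f l) - Phi (f 0))"
proof -
  have fc: "continuous_on {0..l} (\<lambda>x. dPhi (f x))"
    using H2_rep_continuous_on[OF H2] by (intro continuous_intros)
  have I: "set_integrable lborel {0..l} (\<lambda>x. fxx x * dPhi (f x))"
      "set_integrable lborel {0..l} (\<lambda>x. dPhi (f x) * fx x)"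
      "set_integrable lborel {0..l} (\<lambda>x. dPhi (f x) * w x)"
    using set_integrable_mult_continuous[OF _ fc, of fxx] set_integrable_mult_continuous[OF _ fc, of fx]
      set_integrable_mult_continuous[OF w fc] H2
    by (auto simp: H2_rep_def ac_deriv_def L2on_set_integrable mult.commute)
  have "AE x \<in> {0..l} in lborel.
      a * (dPhi (f x) * w x) \<le> eps * (fxx x * dPhi (f x)) - b * (dPhi (f x) * fx x)"
    using pde AE_lborel_singleton[of 0] AE_lborel_singleton[of l]
  proof eventually_elim
    case (elim x)
    show ?case
    proof
      assume "x \<in> {0..l}"
      then have "eps * fxx x - b * fx x \<le> a * w x" using elim by auto
      then have "dPhi (f x) * (a * w x) \<le> dPhi (f x) * (eps * fxx x - b * fx x)"
        using dPhi_nonpos[of "f x"] by (rule mult_left_mono_neg)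
      then show "a * (dPhi (f x) * w x) \<le> eps * (fxx x * dPhi (f x)) - b * (dPhi (f x) * fx x)"
        by (simp add: algebra_simps)
    qed
  qed
  then have "(LINT x:{0..l}|lborel. a * (dPhi (f x) * w x))
      \<le> (LINT x:{0..l}|lborel. eps * (fxx x * dPhi (f x)) - b * (dPhi (f x) * fx x))"
    using I by (intro set_integral_mono_AE set_integrable_mult_right set_integral_diff(1))
  then have "a * (LINT x:{0..l}|lborel. dPhi (f x) * w x)
      \<le> eps * (LINT x:{0..l}|lborel. fxx x * dPhi (f x)) - b * (LINT x:{0..l}|lborel. dPhi (f x) * fx x)"
    using I by (simp add: set_integral_diff(2))
  then show ?thesis
    using H2_rep_set_integral_dPhi_diffusion[OF H2] H2_rep_set_integral_dPhi_transport[OF H2] l eps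
    by (smt (verit) mult_left_mono)
qed

section \<open>Cancellation of the vertex terms\<close>

lemma network_finite_edges:
  assumes "network V E"
  shows "finite E"
  using assms finite_subset[of E "V \<times> V"] unfolding network_def by auto

lemma sum_edges_endpoint_diff:
  fixes K :: "('v \<times> 'v) \<Rightarrow> 'v \<Rightarrow> real"
  assumes "network V E"
  shows "(\<Sum>e\<in>E. K e (snd e) - K e (fst e)) = (\<Sum>v\<in>V. \<Sum>e\<in>edges_at E v. nE e v * K e v)"
proof -
  have finV: "finite V" and EV: "E \<subseteq> V \<times> V" and loopfree: "\<forall>e\<in>E. fst e \<noteq> snd e"
    using assms unfolding network_def by auto
  have finE: "finite E" by (rule network_finite_edges[OF assms])
  have "K e (snd e) - K e (fst e) = (\<Sum>v\<in>V. nE e v * K e v)" if e: "e \<in> E" for e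
  proof -
    have "{fst e, snd e} \<subseteq> V" using EV e by (cases e) auto
    then have "(\<Sum>v\<in>V. nE e v * K e v) = (\<Sum>v\<in>{fst e, snd e}. nE e v * K e v)"
      by (intro sum.mono_neutral_right[OF finV]) (auto simp: nE_def)
    moreover have "fst e \<noteq> snd e" using loopfree e by blast
    ultimately show ?thesis by (simp add: nE_def)
  qed
  then have "(\<Sum>e\<in>E. K e (snd e) - K e (fst e)) = (\<Sum>v\<in>V. \<Sum>e\<in>E. nE e v * K e v)"
    by (simp add: sum.swap[of _ V])
  also have "\<dots> = (\<Sum>v\<in>V. \<Sum>e\<in>edges_at E v. nE e v * K e v)"
    by (intro sum.cong refl sum.mono_neutral_right[OF finE]) (auto simp: edges_at_def)
  finally show ?thesis .
qed

definition penalty_flux ::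
    "(('v \<times> 'v) \<Rightarrow> real) \<Rightarrow> (('v \<times> 'v) \<Rightarrow> real) \<Rightarrow> (('v \<times> 'v) \<Rightarrow> real)
      \<Rightarrow> (('v \<times> 'v) \<Rightarrow> real \<Rightarrow> real) \<Rightarrow> (('v \<times> 'v) \<Rightarrow> real \<Rightarrow> real) \<Rightarrow> ('v \<times> 'v) \<Rightarrow> 'v \<Rightarrow> real"
  where "penalty_flux len b eps U Ux e v =
    eps e * at_vertex e (len e) (Ux e) v * dPhi (at_vertex e (len e) (U e) v)
      - b e * Phi (at_vertex e (len e) (U e) v)"

lemma penalty_flux_sum_at_vertex:
  assumes v: "v \<in> V"
    and balance: "\<forall>v\<in>inner_vertices V E. (\<Sum>e\<in>edges_at E v. b e * nE e v) = 0"
    and cont: "\<forall>e1\<in>edges_at E v. \<forall>e2\<in>edges_at E v.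
                 at_vertex e1 (len e1) (U e1) v = at_vertex e2 (len e2) (U e2) v"
    and kirchhoff: "\<forall>v\<in>inner_vertices V E.
                 (\<Sum>e\<in>edges_at E v. eps e * at_vertex e (len e) (Ux e) v * nE e v) = 0"
    and bdry: "\<forall>v\<in>bdry_vertices V E. \<forall>e\<in>edges_at E v. at_vertex e (len e) (U e) v \<ge> 0"
  shows "(\<Sum>e\<in>edges_at E v. nE e v * penalty_flux len b eps U Ux e v) = 0"
proof (cases "v \<in> inner_vertices V E")
  case True
  then have "edges_at E v \<noteq> {}" unfolding inner_vertices_def by auto
  then obtain e0 where e0: "e0 \<in> edges_at E v" by blast
  define Uv where "Uv = at_vertex e0 (len e0) (U e0) v"
  have "at_vertex e (len e) (U e) v = Uv" if "e \<in> edges_at E v" for e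
    using cont e0 that unfolding Uv_def by blast
  then have "(\<Sum>e\<in>edges_at E v. nE e v * penalty_flux len b eps U Ux e v) =
      (\<Sum>e\<in>edges_at E v. dPhi Uv * (eps e * at_vertex e (len e) (Ux e) v * nE e v) - Phi Uv * (b e * nE e v))"
    unfolding penalty_flux_def by (intro sum.cong refl) (simp add: algebra_simps)
  also have "\<dots> = dPhi Uv * (\<Sum>e\<in>edges_at E v. eps e * at_vertex e (len e) (Ux e) v * nE e v)
      - Phi Uv * (\<Sum>e\<in>edges_at E v. b e * nE e v)"
    by (simp add: sum_subtractf sum_distrib_left)
  finally show ?thesis
    using kirchhoff balance True by simp
next
  case False
  then have "v \<in> bdry_vertices V E" using v unfolding bdry_vertices_def by blast
  then show ?thesis
    using bdry by (intro sum.neutral) (simp add: penalty_flux_def Phi_eq_0 dPhi_eq_0)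
qed

lemma network_boundary_terms_eq_0:
  assumes net: "network V E"
    and balance: "\<forall>v\<in>inner_vertices V E. (\<Sum>e\<in>edges_at E v. b e * nE e v) = 0"
    and cont: "\<forall>v\<in>V. \<forall>e1\<in>edges_at E v. \<forall>e2\<in>edges_at E v.
                 at_vertex e1 (len e1) (U e1) v = at_vertex e2 (len e2) (U e2) v"
    and kirchhoff: "\<forall>v\<in>inner_vertices V E.
                 (\<Sum>e\<in>edges_at E v. eps e * at_vertex e (len e) (Ux e) v * nE e v) = 0"
    and bdry: "\<forall>v\<in>bdry_vertices V E. \<forall>e\<in>edges_at E v. at_vertex e (len e) (U e) v \<ge> 0"
  shows "(\<Sum>e\<in>E. eps e * (Ux e (len e) * dPhi (U e (len e)) - Ux e 0 * dPhi (U e 0))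
                 - b e * (Phi (U e (len e)) - Phi (U e 0))) = 0"
proof -
  have "(\<Sum>e\<in>E. eps e * (Ux e (len e) * dPhi (U e (len e)) - Ux e 0 * dPhi (U e 0))
                 - b e * (Phi (U e (len e)) - Phi (U e 0)))
      = (\<Sum>e\<in>E. penalty_flux len b eps U Ux e (snd e) - penalty_flux len b eps U Ux e (fst e))"
    using net unfolding network_def
    by (intro sum.cong refl) (auto simp: penalty_flux_def at_vertex_def algebra_simps)
  also have "\<dots> = (\<Sum>v\<in>V. \<Sum>e\<in>edges_at E v. nE e v * penalty_flux len b eps U Ux e v)"
    by (rule sum_edges_endpoint_diff[OF net])
  also have "\<dots> = 0"
    using penalty_flux_sum_at_vertex[OF _ balance _ kirchhoff bdry] cont by (intro sum.neutral) blast
  finally show ?thesis .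
qed

section \<open>A criterion via left Dini derivatives\<close>

lemma left_Dini_bound_strict:
  fixes f :: "real \<Rightarrow> real"
  assumes cont: "continuous_on {a..b} f" and e: "\<epsilon> > 0"
    and Dini: "\<And>s \<epsilon>. s \<in> {a<..<b} \<Longrightarrow> \<epsilon> > 0 \<Longrightarrow> eventually (\<lambda>t. f s \<le> f t + \<epsilon> * (s - t)) (at_left s)"
  shows "\<forall>t\<in>{a..<b}. f t < f a + \<epsilon> * (1 + t - a)"
proof (rule ccontr)
  define K where "K = {t \<in> {a..b}. f a + \<epsilon> * (1 + t - a) \<le> f t}"
  define B where "B = K \<inter> {..<b}"
  assume "\<not> ?thesis"
  then obtain b0 where b0: "b0 \<in> B" unfolding B_def K_def by force
  have B_below: "bdd_below B" unfolding B_def K_def by (auto intro: bdd_belowI[of _ a])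
  define c where "c = Inf B"
  \<comment> \<open>the first time the bound fails still violates it, by continuity\<close>
  have "closed K"
    unfolding K_def by (intro continuous_on_closed_Collect_le cont continuous_intros closed_atLeastAtMost)
  then have "closure B \<subseteq> K"
    by (intro closure_minimal) (auto simp: B_def)
  then have "c \<in> K"
    using closure_contains_Inf[OF _ B_below] b0 unfolding c_def by blast
  then have c_bad: "f a + \<epsilon> * (1 + c - a) \<le> f c" and "a \<le> c"
    unfolding K_def by auto
  moreover have "c < b"
    using cInf_lower[OF b0 B_below] b0 unfolding c_def B_def by auto
  moreover have "c \<noteq> a" using c_bad e by auto
  ultimately have c: "c \<in> {a<..<b}" by auto
  have "eventually (\<lambda>t. f c \<le> f t + \<epsilon> / 2 * (c - t) \<and> t \<in> {a<..<c}) (at_left c)"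
    using Dini[OF c, of "\<epsilon> / 2"] eventually_at_left_real[of a c] c e by (simp add: eventually_conj)
  then obtain t where t: "f c \<le> f t + \<epsilon> / 2 * (c - t)" "a < t" "t < c"
    using eventually_happens[of _ "at_left c"] by auto
  have "t \<notin> B"
    using t cInf_lower[OF _ B_below] unfolding c_def by force
  then have "f t < f a + \<epsilon> * (1 + t - a)"
    using t \<open>c < b\<close> unfolding B_def K_def by auto
  moreover have "\<epsilon> / 2 * (c - t) \<le> \<epsilon> * (c - t)"
    using t e by simp
  ultimately show False
    using t c_bad by (simp add: algebra_simps)
qed

lemma continuous_on_left_Dini_le:
  fixes f :: "real \<Rightarrow> real"
  assumes cont: "continuous_on {a..b} f"
    and Dini: "\<And>s \<epsilon>. s \<in> {a<..<b} \<Longrightarrow> \<epsilon> > 0 \<Longrightarrow> eventually (\<lambda>t. f s \<le> f t + \<epsilon> * (s - t)) (at_left s)"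
    and t: "t \<in> {a..b}"
  shows "f t \<le> f a"
proof (cases "a = t")
  case False
  have cont_t: "continuous_on {a..t} f"
    using t by (intro continuous_on_subset[OF cont]) auto
  have Dini_t: "eventually (\<lambda>r. f s \<le> f r + \<epsilon> * (s - r)) (at_left s)"
    if "s \<in> {a<..<t}" "\<epsilon> > 0" for s \<epsilon>
    using that t by (intro Dini) auto
  have bound: "f t \<le> f a + \<epsilon> * (1 + t - a)" if e: "\<epsilon> > 0" for \<epsilon>
  proof -
    have "{a..<t} \<subseteq> {r \<in> {a..t}. f r \<le> f a + \<epsilon> * (1 + r - a)}"
      using left_Dini_bound_strict[OF cont_t e Dini_t] by force
    moreover have "closed {r \<in> {a..t}. f r \<le> f a + \<epsilon> * (1 + r - a)}"
      by (intro continuous_on_closed_Collect_le cont_t continuous_intros closed_atLeastAtMost)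
    ultimately have "closure {a..<t} \<subseteq> {r \<in> {a..t}. f r \<le> f a + \<epsilon> * (1 + r - a)}"
      by (rule closure_minimal)
    then show ?thesis
      using t False by (auto simp: closure_atLeastLessThan)
  qed
  show ?thesis
  proof (rule field_le_epsilon)
    fix e :: real assume "e > 0"
    then have "f t \<le> f a + e / (1 + t - a) * (1 + t - a)"
      using t by (intro bound) auto
    then show "f t \<le> f a + e" using t by simp
  qed
qed simp

section \<open>The penalty energy\<close>

lemma set_integral_Phi_diff_le:
  fixes f g :: "real \<Rightarrow> real"
  assumes f: "continuous_on {0..l} f" and g: "continuous_on {0..l} g"
  shows "(LINT x:{0..l}|lborel. Phi (f x)) - (LINT x:{0..l}|lborel. Phi (g x))
      \<le> (LINT x:{0..l}|lborel. dPhi (f x) * (f x - g x))"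
proof -
  have I: "set_integrable lborel {0..l} (\<lambda>x. Phi (f x))" "set_integrable lborel {0..l} (\<lambda>x. Phi (g x))"
      "set_integrable lborel {0..l} (\<lambda>x. dPhi (f x) * (f x - g x))"
    using f g by (auto intro!: borel_integrable_atLeastAtMost' continuous_intros)
  have "(LINT x:{0..l}|lborel. Phi (f x) - Phi (g x)) \<le> (LINT x:{0..l}|lborel. dPhi (f x) * (f x - g x))"
    by (rule set_integral_mono[OF set_integral_diff(1)[OF I(1,2)] I(3)]) (rule Phi_diff_le)
  then show ?thesis
    by (simp add: set_integral_diff(2)[OF I(1,2)])
qed

lemma abs_set_integral_Phi_diff_le:
  fixes f g :: "real \<Rightarrow> real"
  assumes f: "continuous_on {0..l} f" and g: "continuous_on {0..l} g"
  shows "\<bar>(LINT x:{0..l}|lborel. Phi (f x)) - (LINT x:{0..l}|lborel. Phi (g x))\<bar>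
      \<le> (LINT x:{0..l}|lborel. \<bar>f x - g x\<bar>)"
proof -
  have I: "set_integrable lborel {0..l} (\<lambda>x. Phi (f x))" "set_integrable lborel {0..l} (\<lambda>x. Phi (g x))"
      "set_integrable lborel {0..l} (\<lambda>x. \<bar>f x - g x\<bar>)"
    using f g by (auto intro!: borel_integrable_atLeastAtMost' continuous_intros)
  have "\<bar>LINT x:{0..l}|lborel. Phi (f x) - Phi (g x)\<bar> \<le> (LINT x:{0..l}|lborel. \<bar>Phi (f x) - Phi (g x)\<bar>)"
    using set_integral_norm_bound[OF set_integral_diff(1)[OF I(1,2)]] by simp
  also have "\<dots> \<le> (LINT x:{0..l}|lborel. \<bar>f x - g x\<bar>)"
    by (intro set_integral_mono[OF set_integrable_abs[OF set_integral_diff(1)[OF I(1,2)]] I(3)]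
        abs_Phi_diff_le)
  finally show ?thesis
    using I by (simp add: set_integral_diff(2))
qed

lemma set_integral_Phi_eq_0_iff:
  fixes f :: "real \<Rightarrow> real"
  assumes f: "continuous_on {0..l} f" and l: "0 < l"
  shows "(LINT x:{0..l}|lborel. Phi (f x)) = 0 \<longleftrightarrow> (\<forall>x\<in>{0<..<l}. 0 \<le> f x)"
proof
  have c: "continuous_on {0..l} (\<lambda>x. Phi (f x))" using f by (rule continuous_on_Phi_comp)
  assume "(LINT x:{0..l}|lborel. Phi (f x)) = 0"
  then have "((\<lambda>x. Phi (f x)) has_integral 0) {0..l}"
    using set_borel_integral_eq_integral[OF borel_integrable_atLeastAtMost'[OF c]]
    by (metis has_integral_integral)
  then have "Phi (f x) = 0" if "x \<in> {0..l}" for x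
    using has_integral_0_cbox_imp_0[of 0 l "\<lambda>x. Phi (f x)" x] c that l Phi_nonneg by auto
  then show "\<forall>x\<in>{0<..<l}. 0 \<le> f x"
    by (auto simp: Phi_eq_0_iff)
next
  assume nonneg: "\<forall>x\<in>{0<..<l}. 0 \<le> f x"
  have "AE x \<in> {0..l} in lborel. Phi (f x) \<le> 0"
    using AE_lborel_singleton[of 0] AE_lborel_singleton[of l]
    by eventually_elim (use nonneg in \<open>auto simp: Phi_eq_0\<close>)
  then have "(LINT x:{0..l}|lborel. Phi (f x)) \<le> (LINT x:{0..l}|lborel. 0)"
    using f by (intro set_integral_mono_AE borel_integrable_atLeastAtMost' continuous_intros) auto
  then show "(LINT x:{0..l}|lborel. Phi (f x)) = 0"
    using set_integral_nonneg_real[of "{0..l}" "\<lambda>x. Phi (f x)"] Phi_nonneg by simp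
qed

lemma continuous_on_set_integral_Phi:
  assumes C1: "C1_L2 T U Ut l" and l: "0 < l"
    and U: "\<And>t. t \<in> {0..T} \<Longrightarrow> continuous_on {0..l} (U t)"
  shows "continuous_on {0..T} (\<lambda>t. LINT x:{0..l}|lborel. Phi (U t x))"
  unfolding continuous_on_def
proof
  fix s assume s: "s \<in> {0..T}"
  define F where "F t = (LINT x:{0..l}|lborel. Phi (U t x))" for t
  have "\<bar>F t - F s\<bar> \<le> (LINT x:{0..l}|lborel. \<bar>U t x - U s x\<bar>)" if "t \<in> {0..T}" for t
    unfolding F_def by (rule abs_set_integral_Phi_diff_le[OF U[OF that] U[OF s]])
  then have "eventually (\<lambda>t. \<bar>F t - F s\<bar> \<le> (LINT x:{0..l}|lborel. \<bar>U t x - U s x\<bar>)) (at s within {0..T})"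
    by (auto simp: eventually_at_filter intro!: always_eventually)
  then have "((\<lambda>t. \<bar>F t - F s\<bar>) \<longlongrightarrow> 0) (at s within {0..T})"
    by (intro tendsto_sandwich[OF _ _ tendsto_const C1_L2_L1_continuous[OF C1 s l]]) simp_all
  then have "((\<lambda>t. F t - F s) \<longlongrightarrow> 0) (at s within {0..T})"
    by (rule tendsto_rabs_zero_cancel)
  then show "(F \<longlongrightarrow> F s) (at s within {0..T})"
    by (rule LIM_zero_cancel)
qed

definition penalty_energy ::
    "('v \<times> 'v) set \<Rightarrow> (('v \<times> 'v) \<Rightarrow> real) \<Rightarrow> (('v \<times> 'v) \<Rightarrow> real)
      \<Rightarrow> (('v \<times> 'v) \<Rightarrow> real \<Rightarrow> real \<Rightarrow> real) \<Rightarrow> real \<Rightarrow> real"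
  where "penalty_energy E len a u t = (\<Sum>e\<in>E. a e * (LINT x:{0..len e}|lborel. Phi (u e t x)))"

lemma penalty_energy_nonneg:
  assumes "\<forall>e\<in>E. 0 \<le> a e"
  shows "0 \<le> penalty_energy E len a u t"
  unfolding penalty_energy_def using assms Phi_nonneg
  by (intro sum_nonneg mult_nonneg_nonneg set_integral_nonneg_real) auto

lemma penalty_energy_eq_0_iff:
  assumes "finite E" and pos: "\<forall>e\<in>E. 0 < len e \<and> 0 < a e"
    and cont: "\<forall>e\<in>E. continuous_on {0..len e} (u e t)"
  shows "penalty_energy E len a u t = 0 \<longleftrightarrow> (\<forall>e\<in>E. \<forall>x\<in>{0<..<len e}. 0 \<le> u e t x)"
proof -
  have "penalty_energy E len a u t = 0 \<longleftrightarrow>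
      (\<forall>e\<in>E. a e * (LINT x:{0..len e}|lborel. Phi (u e t x)) = 0)"
    unfolding penalty_energy_def using assms(1) pos Phi_nonneg
    by (intro sum_nonneg_eq_0_iff mult_nonneg_nonneg set_integral_nonneg_real) auto
  also have "\<dots> \<longleftrightarrow> (\<forall>e\<in>E. \<forall>x\<in>{0<..<len e}. 0 \<le> u e t x)"
  proof (rule ball_cong[OF refl])
    fix e assume "e \<in> E"
    then show "a e * (LINT x:{0..len e}|lborel. Phi (u e t x)) = 0 \<longleftrightarrow> (\<forall>x\<in>{0<..<len e}. 0 \<le> u e t x)"
      using pos cont set_integral_Phi_eq_0_iff[of "len e" "u e t"] by auto
  qed
  finally show ?thesis .
qed

lemma penalty_energy_continuous_on:
  assumes "finite E" and "\<forall>e\<in>E. 0 < len e"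
    and "\<forall>e\<in>E. C1_L2 T (u e) (ut e) (len e)"
    and "\<forall>e\<in>E. \<forall>t\<in>{0..T}. continuous_on {0..len e} (u e t)"
  shows "continuous_on {0..T} (penalty_energy E len a u)"
  unfolding penalty_energy_def[abs_def] using assms
  by (intro continuous_on_sum continuous_on_mult_left continuous_on_set_integral_Phi) auto

text \<open>The left-hand side is the time derivative of \<^const>\<open>penalty_energy\<close>.\<close>

lemma penalty_energy_dissipation_nonpos:
  fixes u ux uxx ut :: "('v \<times> 'v) \<Rightarrow> real \<Rightarrow> real"
  assumes net: "network V E"
    and params: "\<forall>e\<in>E. 0 < len e \<and> 0 \<le> eps e"
    and balance: "\<forall>v\<in>inner_vertices V E. (\<Sum>e\<in>edges_at E v. b e * nE e v) = 0"
    and H2: "\<forall>e\<in>E. H2_rep (len e) (u e) (ux e) (uxx e)"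
    and ut: "\<forall>e\<in>E. set_integrable lborel {0..len e} (ut e)"
    and cont: "\<forall>v\<in>V. \<forall>e1\<in>edges_at E v. \<forall>e2\<in>edges_at E v.
                 at_vertex e1 (len e1) (u e1) v = at_vertex e2 (len e2) (u e2) v"
    and pde: "\<forall>e\<in>E. AE x in lborel. x \<in> {0<..<len e} \<longrightarrow>
                 a e * ut e x + b e * ux e x - eps e * uxx e x \<ge> 0"
    and kirchhoff: "\<forall>v\<in>inner_vertices V E.
                 (\<Sum>e\<in>edges_at E v. eps e * at_vertex e (len e) (ux e) v * nE e v) = 0"
    and bdry: "\<forall>v\<in>bdry_vertices V E. \<forall>e\<in>edges_at E v. at_vertex e (len e) (u e) v \<ge> 0"
  shows "(\<Sum>e\<in>E. a e * (LINT x:{0..len e}|lborel. dPhi (u e x) * ut e x)) \<le> 0"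
proof -
  have "(\<Sum>e\<in>E. a e * (LINT x:{0..len e}|lborel. dPhi (u e x) * ut e x))
      \<le> (\<Sum>e\<in>E. eps e * (ux e (len e) * dPhi (u e (len e)) - ux e 0 * dPhi (u e 0))
                 - b e * (Phi (u e (len e)) - Phi (u e 0)))"
    using params H2 ut pde by (intro sum_mono edge_energy_inequality) auto
  also have "\<dots> = 0"
    by (rule network_boundary_terms_eq_0[OF net balance cont kirchhoff bdry])
  finally show ?thesis .
qed

lemma penalty_energy_left_Dini:
  assumes "finite E" and pos: "\<forall>e\<in>E. 0 < len e \<and> 0 \<le> a e"
    and C1: "\<forall>e\<in>E. C1_L2 T (u e) (ut e) (len e)"
    and cont: "\<forall>e\<in>E. \<forall>t\<in>{0..T}. continuous_on {0..len e} (u e t)"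
    and s: "s \<in> {0<..<T}"
    and dissipation: "(\<Sum>e\<in>E. a e * (LINT x:{0..len e}|lborel. dPhi (u e s x) * ut e s x)) \<le> 0"
    and e: "\<epsilon> > 0"
  shows "eventually (\<lambda>t. penalty_energy E len a u s \<le> penalty_energy E len a u t + \<epsilon> * (s - t))
           (at_left s)"
proof -
  define Q where "Q t = (\<Sum>e\<in>E. a e * (LINT x:{0..len e}|lborel. dPhi (u e s x) * ((u e s x - u e t x) / (s - t))))" for t
  have "at s within {0..T} = at s"
    using s by (intro at_within_interior) (simp add: interior_atLeastAtMost_real)
  moreover have "(Q \<longlongrightarrow> (\<Sum>e\<in>E. a e * (LINT x:{0..len e}|lborel. dPhi (u e s x) * ut e s x)))
      (at s within {0..T})"
    unfolding Q_def using pos C1 cont s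
    by (intro tendsto_sum tendsto_mult_left C1_L2_weighted_diff_quotient continuous_intros) auto
  ultimately have "(Q \<longlongrightarrow> (\<Sum>e\<in>E. a e * (LINT x:{0..len e}|lborel. dPhi (u e s x) * ut e s x))) (at s)"
    by simp
  then have "eventually (\<lambda>t. Q t < \<epsilon>) (at s)"
    by (rule order_tendstoD(2)) (use dissipation e in linarith)
  then have "eventually (\<lambda>t. Q t < \<epsilon> \<and> t \<in> {0<..<s}) (at_left s)"
    using eventually_at_left_real[of 0 s] s by (auto simp: eventually_at_split eventually_conj)
  then show ?thesis
  proof eventually_elim
    case (elim t)
    then have t: "t \<in> {0..T}" "t < s" using s by auto
    \<comment> \<open>convexity of \<open>Phi\<close> bounds the backward difference quotient of the energy\<close>
    have "penalty_energy E len a u s - penalty_energy E len a u t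
        \<le> (\<Sum>e\<in>E. a e * (LINT x:{0..len e}|lborel. dPhi (u e s x) * (u e s x - u e t x)))"
      unfolding penalty_energy_def sum_subtractf[symmetric] right_diff_distrib[symmetric]
      using pos cont s t by (intro sum_mono mult_left_mono set_integral_Phi_diff_le) auto
    also have "\<dots> = (s - t) * Q t"
      unfolding Q_def sum_distrib_left using t
      by (intro sum.cong refl) (simp add: set_integral_mult_right[symmetric] field_simps)
    also have "\<dots> \<le> (s - t) * \<epsilon>"
      using elim t by simp
    finally show ?case by (simp add: algebra_simps)
  qed
qed

lemma network_penalty_energy_left_Dini:
  fixes u ux uxx ut :: "('v \<times> 'v) \<Rightarrow> real \<Rightarrow> real \<Rightarrow> real"
  assumes net: "network V E"
    and params: "\<forall>e\<in>E. 0 < len e \<and> 0 \<le> a e \<and> 0 \<le> eps e"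
    and balance: "\<forall>v\<in>inner_vertices V E. (\<Sum>e\<in>edges_at E v. b e * nE e v) = 0"
    and H2: "\<forall>e\<in>E. \<forall>t\<in>{0..T}. H2_rep (len e) (u e t) (ux e t) (uxx e t)"
    and H1_cont: "\<forall>t\<in>{0..T}. \<forall>v\<in>V. \<forall>e1\<in>edges_at E v. \<forall>e2\<in>edges_at E v.
                   at_vertex e1 (len e1) (u e1 t) v = at_vertex e2 (len e2) (u e2 t) v"
    and C1: "\<forall>e\<in>E. C1_L2 T (u e) (ut e) (len e)"
    and pde: "\<forall>e\<in>E. \<forall>t\<in>{0<..<T}. AE x in lborel. x \<in> {0<..<len e} \<longrightarrow>
                 a e * ut e t x + b e * ux e t x - eps e * uxx e t x \<ge> 0"
    and kirchhoff: "\<forall>t\<in>{0<..<T}. \<forall>v\<in>inner_vertices V E.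
                 (\<Sum>e\<in>edges_at E v. eps e * at_vertex e (len e) (ux e t) v * nE e v) = 0"
    and bdry: "\<forall>t\<in>{0<..<T}. \<forall>v\<in>bdry_vertices V E. \<forall>e\<in>edges_at E v.
                 at_vertex e (len e) (u e t) v \<ge> 0"
    and s: "s \<in> {0<..<T}" and e: "\<epsilon> > 0"
  shows "eventually (\<lambda>t. penalty_energy E len a u s \<le> penalty_energy E len a u t + \<epsilon> * (s - t))
           (at_left s)"
proof (rule penalty_energy_left_Dini[OF network_finite_edges[OF net] _ C1 _ s _ e])
  have s': "s \<in> {0..T}" using s by simp
  have ut_s: "\<forall>e\<in>E. set_integrable lborel {0..len e} (ut e s)"
    using C1 s' by (metis C1_L2_L2on(2) L2on_set_integrable)
  have params_s: "\<forall>e\<in>E. 0 < len e \<and> 0 \<le> eps e"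
    using params by blast
  have H2_s: "\<forall>e\<in>E. H2_rep (len e) (u e s) (ux e s) (uxx e s)"
    using H2 s' by blast
  have pde_s: "\<forall>e\<in>E. AE x in lborel. x \<in> {0<..<len e} \<longrightarrow>
      a e * ut e s x + b e * ux e s x - eps e * uxx e s x \<ge> 0"
    using pde s by blast
  show "(\<Sum>e\<in>E. a e * (LINT x:{0..len e}|lborel. dPhi (u e s x) * ut e s x)) \<le> 0"
    by (rule penalty_energy_dissipation_nonpos[OF net params_s balance H2_s ut_s
        bspec[OF H1_cont s'] pde_s bspec[OF kirchhoff s] bspec[OF bdry s]])
  show "\<forall>e\<in>E. \<forall>t\<in>{0..T}. continuous_on {0..len e} (u e t)"
    using H2 H2_rep_continuous_on(1) by blast
qed (use params in blast)


theorem lemma3p1: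
  fixes V :: "'v set" and E :: "('v \<times> 'v) set"
    and len a b eps :: "('v \<times> 'v) \<Rightarrow> real" and T :: real
    and u ux uxx ut :: "('v \<times> 'v) \<Rightarrow> real \<Rightarrow> real \<Rightarrow> real"
  assumes net: "network V E"
    and params: "\<forall>e\<in>E. len e > 0 \<and> a e > 0 \<and> b e > 0 \<and> eps e > 0 \<and> eps e \<le> 1"
    and balance: "\<forall>v\<in>inner_vertices V E. (\<Sum>e\<in>edges_at E v. b e * nE e v) = 0"
    and Tpos: "T > 0"
    and H2: "\<forall>e\<in>E. \<forall>t\<in>{0..T}. H2_rep (len e) (u e t) (ux e t) (uxx e t)"
    and H1_cont: "\<forall>t\<in>{0..T}. \<forall>v\<in>V. \<forall>e1\<in>edges_at E v. \<forall>e2\<in>edges_at E v.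
                   at_vertex e1 (len e1) (u e1 t) v = at_vertex e2 (len e2) (u e2 t) v"
    and C0: "\<forall>e\<in>E. C0_H2 T (u e) (ux e) (uxx e) (len e)"
    and C1: "\<forall>e\<in>E. C1_L2 T (u e) (ut e) (len e)"
    and pde: "\<forall>e\<in>E. \<forall>t\<in>{0<..<T}. AE x in lborel. x \<in> {0<..<len e} \<longrightarrow>
                 a e * ut e t x + b e * ux e t x - eps e * uxx e t x \<ge> 0"
    and kirchhoff: "\<forall>t\<in>{0<..<T}. \<forall>v\<in>inner_vertices V E.
                 (\<Sum>e\<in>edges_at E v. eps e * at_vertex e (len e) (ux e t) v * nE e v) = 0"
    and bdry: "\<forall>t\<in>{0<..<T}. \<forall>v\<in>bdry_vertices V E. \<forall>e\<in>edges_at E v.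
                 at_vertex e (len e) (u e t) v \<ge> 0"
    and init: "\<forall>e\<in>E. \<forall>x\<in>{0<..<len e}. u e 0 x \<ge> 0"
  shows "\<forall>t\<in>{0..T}. \<forall>e\<in>E. \<forall>x\<in>{0<..<len e}. u e t x \<ge> 0"
proof -
  have finE: "finite E" by (rule network_finite_edges[OF net])
  have pos: "\<forall>e\<in>E. 0 < len e \<and> 0 < a e" using params by auto
  have cont: "\<forall>e\<in>E. \<forall>t\<in>{0..T}. continuous_on {0..len e} (u e t)"
    using H2 H2_rep_continuous_on(1) by blast
  have En_cont: "continuous_on {0..T} (penalty_energy E len a u)"
    using pos by (intro penalty_energy_continuous_on[OF finE _ C1 cont]) simp
  have Dini: "eventually (\<lambda>t. penalty_energy E len a u s \<le> penalty_energy E len a u t + \<epsilon> * (s - t))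
      (at_left s)" if "s \<in> {0<..<T}" "\<epsilon> > 0" for s \<epsilon>
    using params that
    by (intro network_penalty_energy_left_Dini[OF net _ balance H2 H1_cont C1 pde kirchhoff bdry]) auto
  have En0: "penalty_energy E len a u 0 = 0"
    using finE pos cont init Tpos by (subst penalty_energy_eq_0_iff) auto
  show ?thesis
  proof (rule ballI)
    fix t assume t: "t \<in> {0..T}"
    have "penalty_energy E len a u t \<le> 0"
      using continuous_on_left_Dini_le[OF En_cont Dini t] En0 by simp
    then have "penalty_energy E len a u t = 0"
      using penalty_energy_nonneg[of E a len u t] pos by force
    then show "\<forall>e\<in>E. \<forall>x\<in>{0<..<len e}. 0 \<le> u e t x"
      using penalty_energy_eq_0_iff[OF finE pos] cont t by simp
  qed
qed

end
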